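(* Let $A\in P(n)$. Then there exists $x\in\mathbb C^n$ with $\|x\|=1$ such that $I(2,A)=\|A\circ xx^*\|_2$; that is, $I(2,A)=\min\{\|A\circ xx^*\|_2: \|x\|=1\}$.
   Context: $P(n)$ denotes positive semidefinite complex $n\times n$ matrices, $\circ$ the Hadamard (entrywise) product, and $\|\cdot\|_2$ the Frobenius norm. $I(2,A)=\min\{\|A\circ B\|_2: B\in P(n),\ \|B\|_2=1\}$. *)

theory Defs
  imports "HOL-Analysis.Analysis"
begin

text \<open>Complex n x n matrices are rendered as complex^'n^'n, with n the (finite) cardinality of 'n.\<close>

definition hermitian_mat :: "complex^'n^'n \<Rightarrow> bool" where
  "hermitian_mat A \<longleftrightarrow> (\<forall>i j. A $ j $ i = cnj (A $ i $ j))"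

definition psd :: "complex^'n^'n \<Rightarrow> bool" where
  "psd A \<longleftrightarrow> hermitian_mat A \<and>
     (\<forall>x::complex^'n. 0 \<le> Re (\<Sum>i\<in>UNIV. \<Sum>j\<in>UNIV. cnj (x $ i) * A $ i $ j * x $ j))"

definition hadamard :: "complex^'n^'n \<Rightarrow> complex^'n^'n \<Rightarrow> complex^'n^'n" (infixl "\<circ>\<^sub>H" 70) where
  "A \<circ>\<^sub>H B = (\<chi> i j. A $ i $ j * B $ i $ j)"

definition frob_norm :: "complex^'n^'n \<Rightarrow> real" where
  "frob_norm A = sqrt (\<Sum>i\<in>UNIV. \<Sum>j\<in>UNIV. (cmod (A $ i $ j))\<^sup>2)"

definition outer :: "complex^'n \<Rightarrow> complex^'n^'n" where
  "outer x = (\<chi> i j. x $ i * cnj (x $ j))"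

text \<open>I(2,A) = min { ||A o B||_2 : B in P(n), ||B||_2 = 1 } (rendered as Inf; the minimum is attained).\<close>
definition I2 :: "complex^'n^'n \<Rightarrow> real" where
  "I2 A = Inf {frob_norm (A \<circ>\<^sub>H B) | B. psd B \<and> frob_norm B = 1}"

end

theory Submission
  imports Defs
begin

(* Write B in P(n) as a sum of rank-one matrices w_k w_k^* with pairwise orthogonal w_k
   (the spectral theorem, obtained by repeatedly splitting off a top eigenvector). Then
     ||A o B||^2 = sum_{k,l} q (conj w_k o w_l),
   where q is the quadratic form of A o conj A, which is positive semidefinite by the Schur
   product theorem. Dropping the off-diagonal terms leaves
     sum_k ||A o w_k w_k^*||^2 >= m^2 sum_k ||w_k||^4 = m^2 ||B||^2,
   with m the minimum of ||A o x x^*|| over the unit sphere, which exists by compactness.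
   As x x^* is itself admissible for ||x|| = 1, this minimum is I(2,A). *)

definition cinner :: "complex^'n \<Rightarrow> complex^'n \<Rightarrow> complex" where
  "cinner x y = (\<Sum>i\<in>UNIV. cnj (x $ i) * y $ i)"

lemma cinner_commute: "cnj (cinner x y) = cinner y x"
  by (simp add: cinner_def mult.commute)

lemma cinner_add_left: "cinner (x + y) z = cinner x z + cinner y z"
  by (simp add: cinner_def distrib_right sum.distrib)

lemma cinner_add_right: "cinner x (y + z) = cinner x y + cinner x z"
  by (simp add: cinner_def distrib_left sum.distrib)

lemma cinner_diff_left: "cinner (x - y) z = cinner x z - cinner y z"
  by (simp add: cinner_def left_diff_distrib sum_subtractf)

lemma cinner_diff_right: "cinner x (y - z) = cinner x y - cinner x z"
  by (simp add: cinner_def right_diff_distrib sum_subtractf)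

lemma cinner_scale_left: "cinner (c *s x) y = cnj c * cinner x y"
  by (simp add: cinner_def sum_distrib_left mult.assoc)

lemma cinner_scale_right: "cinner x (c *s y) = c * cinner x y"
  by (simp add: cinner_def sum_distrib_left mult.left_commute)

lemma cinner_zero_left [simp]: "cinner 0 x = 0"
  by (simp add: cinner_def)

lemma cinner_zero_right [simp]: "cinner x 0 = 0"
  by (simp add: cinner_def)

lemma cinner_sum_right: "cinner x (\<Sum>k\<in>S. f k) = (\<Sum>k\<in>S. cinner x (f k))"
  unfolding cinner_def by (simp add: sum_distrib_left) (rule sum.swap)

lemma norm_vec_sq: "(norm x)\<^sup>2 = (\<Sum>i\<in>UNIV. (cmod (x $ i))\<^sup>2)"
  by (simp add: norm_vec_def L2_set_def sum_nonneg)

lemma cinner_self: "cinner x x = of_real ((norm x)\<^sup>2)"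
  by (simp add: cinner_def norm_vec_sq complex_norm_square mult.commute del: of_real_power)

lemma scaleR_eq_of_real_smult: "r *\<^sub>R x = of_real r *s (x :: complex^'n)"
  by (simp add: vec_eq_iff scaleR_conv_of_real[where 'a=complex])

lemma outer_mult_vector: "outer w *v x = cinner w x *s w"
  by (simp add: outer_def cinner_def matrix_vector_mult_def vec_eq_iff sum_distrib_left mult_ac)

lemma cinner_outer_self: "cinner x (outer w *v x) = of_real ((cmod (cinner w x))\<^sup>2)"
  by (simp add: outer_mult_vector cinner_scale_right complex_norm_square
      flip: cinner_commute[of w x] del: of_real_power)

section \<open>Positive semidefinite matrices\<close>

lemma psd_iff_cinner: "psd A \<longleftrightarrow> hermitian_mat A \<and> (\<forall>x. 0 \<le> Re (cinner x (A *v x)))"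
  by (simp add: psd_def cinner_def matrix_vector_mult_def sum_distrib_left mult.assoc)

lemma hermitian_mat_cinner:
  assumes "hermitian_mat A"
  shows "cinner (A *v x) y = cinner x (A *v y)"
proof -
  have cnj_entry: "cnj (A $ i $ j) = A $ j $ i" for i j
    using assms unfolding hermitian_mat_def by metis
  have "cinner (A *v x) y = (\<Sum>i\<in>UNIV. \<Sum>j\<in>UNIV. cnj (x $ j) * (A $ j $ i * y $ i))"
    by (simp add: cinner_def matrix_vector_mult_def sum_distrib_left sum_distrib_right cnj_entry mult_ac)
  also have "\<dots> = cinner x (A *v y)"
    by (subst sum.swap) (simp add: cinner_def matrix_vector_mult_def sum_distrib_left)
  finally show ?thesis .
qed

lemma hermitian_mat_add: "hermitian_mat A \<Longrightarrow> hermitian_mat B \<Longrightarrow> hermitian_mat (A + B)"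
  unfolding hermitian_mat_def by (metis complex_cnj_add vector_add_component)

lemma hermitian_mat_diff: "hermitian_mat A \<Longrightarrow> hermitian_mat B \<Longrightarrow> hermitian_mat (A - B)"
  unfolding hermitian_mat_def by (metis complex_cnj_diff vector_minus_component)

lemma hermitian_mat_mat_of_real: "hermitian_mat (mat (of_real r))"
  by (simp add: hermitian_mat_def mat_def)

lemma hermitian_mat_outer: "hermitian_mat (outer x)"
  by (simp add: hermitian_mat_def outer_def mult.commute)

lemma psd_zero: "psd 0"
  by (simp add: psd_iff_cinner hermitian_mat_def)

lemma psd_add: "psd A \<Longrightarrow> psd B \<Longrightarrow> psd (A + B)"
  by (simp add: psd_iff_cinner hermitian_mat_add matrix_vector_mult_add_rdistrib cinner_add_right)

lemma psd_sum: "(\<And>k. k \<in> S \<Longrightarrow> psd (M k)) \<Longrightarrow> psd (\<Sum>k\<in>S. M k)"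
  by (induction S rule: infinite_finite_induct) (simp_all add: psd_zero psd_add)

lemma psd_outer: "psd (outer x)"
  by (simp add: psd_iff_cinner hermitian_mat_outer cinner_outer_self)

lemma nonneg_quadratic_imp_linear_coeff_zero:
  fixes a b :: real
  assumes "0 \<le> b" and "\<And>t. 0 \<le> a * t + b * t\<^sup>2"
  shows "a = 0"
proof (rule ccontr)
  assume "a \<noteq> 0"
  define t where "t = - a / (b + 1)"
  have "a * t + b * t\<^sup>2 = t * (a + b * t)"
    by (simp add: power2_eq_square algebra_simps)
  also have "a + b * t = a / (b + 1)"
    using \<open>0 \<le> b\<close> by (simp add: t_def field_simps)
  also have "t * (a / (b + 1)) = - (a / (b + 1))\<^sup>2"
    by (simp add: t_def power2_eq_square)
  also have "\<dots> < 0"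
    using \<open>a \<noteq> 0\<close> \<open>0 \<le> b\<close> by simp
  finally show False using assms(2)[of t] by simp
qed

lemma psd_form_zero_imp_kernel:
  assumes "psd M" and "Re (cinner x (M *v x)) = 0"
  shows "M *v x = 0"
proof -
  have herm: "hermitian_mat M" and pos: "\<And>z. 0 \<le> Re (cinner z (M *v z))"
    using assms(1) by (auto simp: psd_iff_cinner)
  define y where "y = M *v x"
  have "0 \<le> 2 * (norm y)\<^sup>2 * t + Re (cinner y (M *v y)) * t\<^sup>2" for t :: real
  proof -
    have "cinner (x + of_real t *s y) (M *v (x + of_real t *s y))
        = cinner x (M *v x) + of_real t * (cinner (M *v x) y + cinner y (M *v x))
          + of_real (t\<^sup>2) * cinner y (M *v y)"
      by (simp add: vector_scalar_commute cinner_add_left cinner_add_right cinner_scale_left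
          cinner_scale_right hermitian_mat_cinner[OF herm] power2_eq_square algebra_simps)
    then show ?thesis
      using pos[of "x + of_real t *s y"] assms(2) by (simp add: y_def cinner_self mult_ac)
  qed
  then have "2 * (norm y)\<^sup>2 = 0"
    using pos[of y] by (intro nonneg_quadratic_imp_linear_coeff_zero) auto
  then show ?thesis by (simp add: y_def)
qed

lemma mat_mult_vector: "mat c *v x = c *s x"
  by (simp add: vec_eq_iff mat_def matrix_vector_mult_def if_distrib[of "\<lambda>a. a * y" for y] cong: if_cong)

lemma cinner_scaleR_self: "cinner (r *\<^sub>R x) (M *v (r *\<^sub>R x)) = of_real (r\<^sup>2) * cinner x (M *v x)"
  by (simp add: scaleR_eq_of_real_smult vector_scalar_commute cinner_scale_left cinner_scale_right power2_eq_square)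

lemma form_attains_max_on_sphere:
  fixes M :: "complex^'n^'n"
  obtains x where "norm x = 1" and "\<And>z. Re (cinner z (M *v z)) \<le> Re (cinner x (M *v x)) * (norm z)\<^sup>2"
proof -
  have "continuous_on (sphere 0 1) (\<lambda>z::complex^'n. Re (cinner z (M *v z)))"
    unfolding cinner_def matrix_vector_mult_def by (intro continuous_intros)
  moreover have "sphere (0::complex^'n) 1 \<noteq> {}"
    by simp
  ultimately obtain x where x: "x \<in> sphere 0 1"
    and max: "\<And>u. u \<in> sphere 0 1 \<Longrightarrow> Re (cinner u (M *v u)) \<le> Re (cinner x (M *v x))"
    using continuous_attains_sup[OF compact_sphere] by blast
  have "Re (cinner z (M *v z)) \<le> Re (cinner x (M *v x)) * (norm z)\<^sup>2" for z
  proof (cases "z = 0")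
    case False
    define u where "u = (1 / norm z) *\<^sub>R z"
    have "z = norm z *\<^sub>R u" and "u \<in> sphere 0 1"
      using False by (simp_all add: u_def)
    then have "Re (cinner z (M *v z)) = (norm z)\<^sup>2 * Re (cinner u (M *v u))"
      using cinner_scaleR_self[of "norm z" u M] by (simp flip: \<open>z = norm z *\<^sub>R u\<close>)
    also have "\<dots> \<le> (norm z)\<^sup>2 * Re (cinner x (M *v x))"
      using max[OF \<open>u \<in> sphere 0 1\<close>] by (simp add: mult_left_mono)
    finally show ?thesis by (simp add: mult.commute)
  qed simp
  with x show thesis by (intro that) auto
qed

(* A maximiser x of the Rayleigh quotient, with maximum l, is an eigenvector: l I - B is
   positive semidefinite and its form vanishes at x. *)
lemma psd_top_eigenvector:
  assumes "psd B" and "B \<noteq> 0"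
  obtains y where "y \<noteq> 0" and "B *v y = (norm y)\<^sup>2 *\<^sub>R y"
proof -
  have herm: "hermitian_mat B" and pos: "\<And>z. 0 \<le> Re (cinner z (B *v z))"
    using assms(1) by (auto simp: psd_iff_cinner)
  obtain x where x: "norm x = 1"
    and max: "\<And>z. Re (cinner z (B *v z)) \<le> Re (cinner x (B *v x)) * (norm z)\<^sup>2"
    using form_attains_max_on_sphere by blast
  define l where "l = Re (cinner x (B *v x))"
  define S where "S = mat (of_real l) - B"
  have form_S: "cinner z (S *v z) = of_real (l * (norm z)\<^sup>2) - cinner z (B *v z)" for z
    by (simp add: S_def matrix_vector_mult_diff_rdistrib mat_mult_vector cinner_diff_right
        cinner_scale_right cinner_self)
  have "hermitian_mat S"
    by (simp add: S_def hermitian_mat_diff hermitian_mat_mat_of_real herm)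
  moreover have "0 \<le> Re (cinner z (S *v z))" for z
    using max[of z] by (simp add: form_S l_def mult.commute)
  ultimately have "psd S"
    by (simp add: psd_iff_cinner)
  moreover have "Re (cinner x (S *v x)) = 0"
    by (simp add: form_S x l_def)
  ultimately have "S *v x = 0"
    by (rule psd_form_zero_imp_kernel)
  then have Bx: "B *v x = l *\<^sub>R x"
    by (simp add: S_def matrix_vector_mult_diff_rdistrib mat_mult_vector scaleR_eq_of_real_smult)
  have "l \<noteq> 0"
  proof
    assume "l = 0"
    then have "B *v z = 0" for z
      using max[of z] pos[of z] by (intro psd_form_zero_imp_kernel[OF assms(1)]) (simp add: l_def)
    then show False
      using assms(2) by (simp add: matrix_eq)
  qed
  then have "0 < l"
    using pos[of x] by (simp add: l_def)
  define y where "y = sqrt l *\<^sub>R x"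
  have "norm y = sqrt l"
    using \<open>0 < l\<close> x by (simp add: y_def)
  then show thesis
    using \<open>0 < l\<close> x Bx
    by (intro that[of y]) (auto simp: y_def scaleR_eq_of_real_smult vector_scalar_commute mult.commute)
qed

section \<open>Spectral decomposition by deflation\<close>

lemma matrix_vector_mult_sum_left: "(\<Sum>k\<in>S. M k) *v x = (\<Sum>k\<in>S. M k *v x)"
  by (induction S rule: infinite_finite_induct) (simp_all add: matrix_vector_mult_add_rdistrib)

lemma outer_eigenvector_mult: "outer y *v y = (norm y)\<^sup>2 *\<^sub>R y"
  by (simp add: outer_mult_vector cinner_self scaleR_eq_of_real_smult)

lemma deflation_kernel_mono:
  assumes "hermitian_mat B" and "B *v y = (norm y)\<^sup>2 *\<^sub>R y" and "B *v s = 0"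
  shows "(B - outer y) *v s = 0"
proof -
  have "of_real ((norm y)\<^sup>2) * cinner y s = cinner (B *v y) s"
    by (simp add: assms(2) scaleR_eq_of_real_smult cinner_scale_left)
  also have "\<dots> = 0"
    by (simp add: hermitian_mat_cinner[OF assms(1)] assms(3))
  finally have "cinner y s = 0"
    by auto
  then show ?thesis
    by (simp add: matrix_vector_mult_diff_rdistrib outer_mult_vector assms(3))
qed

lemma psd_deflation:
  assumes "psd B" and eig: "B *v y = (norm y)\<^sup>2 *\<^sub>R y"
  shows "psd (B - outer y)"
proof -
  define D where "D = B - outer y"
  have herm: "hermitian_mat B" and pos: "\<And>z. 0 \<le> Re (cinner z (B *v z))"
    using assms(1) by (auto simp: psd_iff_cinner)
  have herm_D: "hermitian_mat D"
    by (simp add: D_def herm hermitian_mat_diff hermitian_mat_outer)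
  have Dy: "D *v y = 0"
    by (simp add: D_def matrix_vector_mult_diff_rdistrib eig outer_eigenvector_mult)
  have "0 \<le> Re (cinner z (D *v z))" for z
  proof -
    define a where "a = cinner y z / of_real ((norm y)\<^sup>2)"
    define w where "w = z - a *s y"
    have "cinner y w = 0"
      by (cases "y = 0") (simp_all add: w_def a_def cinner_diff_right cinner_scale_right cinner_self)
    have "cinner z (D *v z) = cinner w (D *v w)"
      using Dy hermitian_mat_cinner[OF herm_D, of y w]
      by (simp add: w_def vector_scalar_commute matrix_vector_mult_diff_distrib cinner_diff_right
          cinner_diff_left cinner_scale_left cinner_scale_right)
    also have "\<dots> = cinner w (B *v w)"
      by (simp add: D_def matrix_vector_mult_diff_rdistrib outer_mult_vector cinner_diff_right
          cinner_scale_right \<open>cinner y w = 0\<close>)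
    finally show ?thesis
      using pos[of w] by simp
  qed
  then show ?thesis
    using herm_D by (simp add: psd_iff_cinner D_def)
qed

lemma dim_kernel_deflation_less:
  assumes "hermitian_mat B" and "y \<noteq> 0" and eig: "B *v y = (norm y)\<^sup>2 *\<^sub>R y"
  shows "vec.dim {v. B *v v = 0} < vec.dim {v. (B - outer y) *v v = 0}"
proof (rule vec.dim_psubset)
  have "{v. B *v v = 0} \<subset> {v. (B - outer y) *v v = 0}"
  proof
    show "{v. B *v v = 0} \<subseteq> {v. (B - outer y) *v v = 0}"
      using deflation_kernel_mono[OF assms(1) eig] by blast
    have "(B - outer y) *v y = 0" and "B *v y \<noteq> 0"
      using assms(2) by (simp_all add: matrix_vector_mult_diff_rdistrib eig outer_eigenvector_mult)
    then show "{v. B *v v = 0} \<noteq> {v. (B - outer y) *v v = 0}"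
      by blast
  qed
  then show "vec.span {v. B *v v = 0} \<subset> vec.span {v. (B - outer y) *v v = 0}"
    by (simp add: vec.span_eq_iff[THEN iffD2] vec.linear_subspace_kernel)
qed

theorem psd_eq_sum_orthogonal_outer:
  fixes B :: "complex^'n^'n"
  assumes "psd B"
  shows "\<exists>(K::nat) w. B = (\<Sum>k<K. outer (w k))
           \<and> pairwise (\<lambda>k l. cinner (w k) (w l) = 0) {..<K}"
  using assms
proof (induction "CARD('n) - vec.dim {v. B *v v = 0}" arbitrary: B rule: less_induct)
  case less
  show ?case
  proof (cases "B = 0")
    case True
    then show ?thesis
      by (intro exI[of _ "0::nat"]) simp
  next
    case False
    have herm: "hermitian_mat B"
      using less.prems by (simp add: psd_iff_cinner)
    obtain y where "y \<noteq> 0" and eig: "B *v y = (norm y)\<^sup>2 *\<^sub>R y"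
      using psd_top_eigenvector[OF less.prems False] .
    have "CARD('n) - vec.dim {v. (B - outer y) *v v = 0} < CARD('n) - vec.dim {v. B *v v = 0}"
      using dim_kernel_deflation_less[OF herm \<open>y \<noteq> 0\<close> eig] dim_subset_UNIV_cart_gen
      by (meson diff_less_mono2 order_less_le_trans)
    then obtain K :: nat and w where D: "B - outer y = (\<Sum>k<K. outer (w k))"
      and orth: "pairwise (\<lambda>k l. cinner (w k) (w l) = 0) {..<K}"
      using less.hyps psd_deflation[OF less.prems eig] by blast
    have "of_real (\<Sum>k<K. (cmod (cinner (w k) y))\<^sup>2) = cinner y ((B - outer y) *v y)"
      by (simp add: D matrix_vector_mult_sum_left cinner_sum_right cinner_outer_self)
    also have "\<dots> = 0"
      by (simp add: matrix_vector_mult_diff_rdistrib eig outer_eigenvector_mult)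
    finally have "(\<Sum>k<K. (cmod (cinner (w k) y))\<^sup>2) = 0"
      by (simp only: of_real_eq_0_iff)
    then have orth_y: "cinner (w k) y = 0 \<and> cinner y (w k) = 0" if "k < K" for k
      using that by (simp add: sum_nonneg_eq_0_iff flip: cinner_commute[of "w k" y])
    define w' where "w' = w(K := y)"
    have "B = (\<Sum>k<Suc K. outer (w' k))"
      using D by (simp add: w'_def algebra_simps)
    moreover have "pairwise (\<lambda>k l. cinner (w' k) (w' l) = 0) {..<Suc K}"
      using orth orth_y by (auto simp: w'_def pairwise_def lessThan_Suc)
    ultimately show ?thesis
      by blast
  qed
qed

section \<open>Schur product theorem\<close>

definition vcnj :: "complex^'n \<Rightarrow> complex^'n" where
  "vcnj x = (\<chi> i. cnj (x $ i))"

definition mat_cnj :: "complex^'n^'n \<Rightarrow> complex^'n^'n" where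
  "mat_cnj A = (\<chi> i j. cnj (A $ i $ j))"

lemma hadamard_sum_left: "(\<Sum>k\<in>S. M k) \<circ>\<^sub>H B = (\<Sum>k\<in>S. M k \<circ>\<^sub>H B)"
  by (induction S rule: infinite_finite_induct) (simp_all add: hadamard_def vec_eq_iff distrib_right)

lemma hadamard_sum_right: "A \<circ>\<^sub>H (\<Sum>k\<in>S. M k) = (\<Sum>k\<in>S. A \<circ>\<^sub>H M k)"
  by (induction S rule: infinite_finite_induct) (simp_all add: hadamard_def vec_eq_iff distrib_left)

lemma hadamard_outer: "outer u \<circ>\<^sub>H outer w = outer (u * w)"
  by (simp add: hadamard_def outer_def vec_eq_iff mult_ac)

theorem psd_hadamard:
  assumes "psd A" and "psd B"
  shows "psd (A \<circ>\<^sub>H B)"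
proof -
  obtain P :: nat and u where A: "A = (\<Sum>p<P. outer (u p))"
    using psd_eq_sum_orthogonal_outer[OF assms(1)] by blast
  obtain K :: nat and w where B: "B = (\<Sum>k<K. outer (w k))"
    using psd_eq_sum_orthogonal_outer[OF assms(2)] by blast
  have "A \<circ>\<^sub>H B = (\<Sum>k<K. \<Sum>p<P. outer (u p * w k))"
    by (simp add: A B hadamard_sum_left hadamard_sum_right hadamard_outer)
  then show ?thesis
    by (simp add: psd_sum psd_outer)
qed

lemma psd_mat_cnj:
  assumes "psd A"
  shows "psd (mat_cnj A)"
proof -
  have herm: "hermitian_mat A" and pos: "\<And>x. 0 \<le> Re (cinner x (A *v x))"
    using assms by (auto simp: psd_iff_cinner)
  have "hermitian_mat (mat_cnj A)"
    using herm unfolding hermitian_mat_def mat_cnj_def vec_lambda_beta by metis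
  moreover have "cinner x (mat_cnj A *v x) = cnj (cinner (vcnj x) (A *v vcnj x))" for x
    by (simp add: cinner_def matrix_vector_mult_def mat_cnj_def vcnj_def sum_distrib_left mult_ac)
  ultimately show ?thesis
    using pos by (simp add: psd_iff_cinner)
qed

section \<open>Frobenius norms of Hadamard products\<close>

lemma sum_swap_nested:
  "(\<Sum>i\<in>A. \<Sum>j\<in>B. \<Sum>k\<in>C. \<Sum>l\<in>D. f i j k l)
     = (\<Sum>k\<in>C. \<Sum>l\<in>D. \<Sum>i\<in>A. \<Sum>j\<in>B. f i j k l)"
  unfolding sum.cartesian_product
  by (rule sum.reindex_bij_witness[of _ "\<lambda>(k, l, i, j). (i, j, k, l)" "\<lambda>(i, j, k, l). (k, l, i, j)"])
    auto

lemma frob_norm_sq: "(frob_norm M)\<^sup>2 = (\<Sum>i\<in>UNIV. \<Sum>j\<in>UNIV. (cmod (M $ i $ j))\<^sup>2)"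
  by (simp add: frob_norm_def sum_nonneg)

lemma frob_norm_eq_norm: "frob_norm M = norm M"
  by (simp add: frob_norm_def norm_vec_def L2_set_def sum_nonneg)

lemma norm_sq_sum_outer_entry:
  "of_real ((cmod ((\<Sum>k\<in>S. outer (w k)) $ i $ j))\<^sup>2)
     = (\<Sum>k\<in>S. \<Sum>l\<in>S. cnj ((vcnj (w k) * w l) $ i) * (vcnj (w k) * w l) $ j)"
proof -
  have "of_real ((cmod ((\<Sum>k\<in>S. outer (w k)) $ i $ j))\<^sup>2)
      = (\<Sum>k\<in>S. w k $ i * cnj (w k $ j)) * (\<Sum>l\<in>S. cnj (w l $ i) * w l $ j)"
    by (simp add: complex_norm_square outer_def del: of_real_power)
  also have "\<dots> = (\<Sum>k\<in>S. \<Sum>l\<in>S. cnj ((vcnj (w k) * w l) $ i) * (vcnj (w k) * w l) $ j)"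
    by (simp add: sum_product vcnj_def mult_ac)
  finally show ?thesis .
qed

lemma frob_norm_hadamard_sq:
  "of_real ((frob_norm (A \<circ>\<^sub>H B))\<^sup>2)
     = (\<Sum>i\<in>UNIV. \<Sum>j\<in>UNIV. A $ i $ j * cnj (A $ i $ j) * of_real ((cmod (B $ i $ j))\<^sup>2))"
  by (simp add: frob_norm_sq hadamard_def norm_mult power_mult_distrib complex_norm_square
      del: of_real_power)

lemma frob_norm_hadamard_sum_outer:
  "of_real ((frob_norm (A \<circ>\<^sub>H (\<Sum>k\<in>S. outer (w k))))\<^sup>2)
     = (\<Sum>k\<in>S. \<Sum>l\<in>S. cinner (vcnj (w k) * w l) ((A \<circ>\<^sub>H mat_cnj A) *v (vcnj (w k) * w l)))"
proof -
  let ?y = "\<lambda>k l. vcnj (w k) * w l"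
  have "of_real ((frob_norm (A \<circ>\<^sub>H (\<Sum>k\<in>S. outer (w k))))\<^sup>2)
      = (\<Sum>i\<in>UNIV. \<Sum>j\<in>UNIV. A $ i $ j * cnj (A $ i $ j) *
           (\<Sum>k\<in>S. \<Sum>l\<in>S. cnj (?y k l $ i) * ?y k l $ j))"
    unfolding frob_norm_hadamard_sq norm_sq_sum_outer_entry ..
  also have "\<dots> = (\<Sum>k\<in>S. \<Sum>l\<in>S. \<Sum>i\<in>UNIV. \<Sum>j\<in>UNIV.
                   cnj (?y k l $ i) * (A $ i $ j * cnj (A $ i $ j) * ?y k l $ j))"
    by (subst sum_swap_nested[symmetric]) (simp add: sum_distrib_left mult_ac)
  also have "\<dots> = (\<Sum>k\<in>S. \<Sum>l\<in>S. cinner (?y k l) ((A \<circ>\<^sub>H mat_cnj A) *v ?y k l))"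
    by (simp add: cinner_def matrix_vector_mult_def hadamard_def mat_cnj_def sum_distrib_left)
  finally show ?thesis .
qed

lemma frob_norm_sum_outer:
  "(frob_norm (\<Sum>k\<in>S. outer (w k)))\<^sup>2 = (\<Sum>k\<in>S. \<Sum>l\<in>S. (cmod (cinner (w k) (w l)))\<^sup>2)"
proof -
  let ?y = "\<lambda>k l. vcnj (w k) * w l"
  have "(of_real ((frob_norm (\<Sum>k\<in>S. outer (w k)))\<^sup>2) :: complex)
      = (\<Sum>i\<in>UNIV. \<Sum>j\<in>UNIV. \<Sum>k\<in>S. \<Sum>l\<in>S. cnj (?y k l $ i) * ?y k l $ j)"
    unfolding frob_norm_sq of_real_sum norm_sq_sum_outer_entry ..
  also have "\<dots> = (\<Sum>k\<in>S. \<Sum>l\<in>S. \<Sum>i\<in>UNIV. \<Sum>j\<in>UNIV. cnj (?y k l $ i) * ?y k l $ j)"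
    by (rule sum_swap_nested)
  also have "\<dots> = (\<Sum>k\<in>S. \<Sum>l\<in>S. cnj (\<Sum>i\<in>UNIV. ?y k l $ i) * (\<Sum>j\<in>UNIV. ?y k l $ j))"
    by (simp add: sum_product)
  also have "\<dots> = of_real (\<Sum>k\<in>S. \<Sum>l\<in>S. (cmod (cinner (w k) (w l)))\<^sup>2)"
    by (simp add: cinner_def vcnj_def complex_norm_square mult.commute del: of_real_power)
  finally show ?thesis
    by (simp only: of_real_eq_iff)
qed

lemma frob_norm_outer: "frob_norm (outer x) = (norm x)\<^sup>2"
proof -
  have "(frob_norm (outer x))\<^sup>2 = ((norm x)\<^sup>2)\<^sup>2"
    using frob_norm_sum_outer[of "\<lambda>_. x" "{()}"] by (simp add: cinner_self norm_power)
  then show ?thesis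
    using power2_eq_iff_nonneg[of "frob_norm (outer x)" "(norm x)\<^sup>2"] by (simp add: frob_norm_eq_norm)
qed

lemma hadamard_outer_scaleR: "A \<circ>\<^sub>H outer (r *\<^sub>R u) = r\<^sup>2 *\<^sub>R (A \<circ>\<^sub>H outer u)"
  by (simp add: vec_eq_iff hadamard_def outer_def scaleR_conv_of_real[where 'a=complex]
      power2_eq_square mult_ac)

lemma frob_norm_hadamard_outer_ge:
  assumes min: "\<And>u. norm u = 1 \<Longrightarrow> m \<le> frob_norm (A \<circ>\<^sub>H outer u)"
  shows "m * (norm w)\<^sup>2 \<le> frob_norm (A \<circ>\<^sub>H outer w)"
proof (cases "w = 0")
  case True
  then show ?thesis
    by (simp add: frob_norm_def outer_def hadamard_def)
next
  case False
  define u where "u = (1 / norm w) *\<^sub>R w"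
  have "w = norm w *\<^sub>R u" and "norm u = 1"
    using False by (simp_all add: u_def)
  then have "A \<circ>\<^sub>H outer w = (norm w)\<^sup>2 *\<^sub>R (A \<circ>\<^sub>H outer u)"
    using hadamard_outer_scaleR[of A "norm w" u] by simp
  then have "frob_norm (A \<circ>\<^sub>H outer w) = (norm w)\<^sup>2 * frob_norm (A \<circ>\<^sub>H outer u)"
    by (simp add: frob_norm_eq_norm)
  then show ?thesis
    using min[OF \<open>norm u = 1\<close>] by (metis mult.commute mult_right_mono zero_le_power2)
qed

theorem frob_norm_hadamard_ge:
  assumes "psd A" and "psd B"
    and min: "\<And>u. norm u = 1 \<Longrightarrow> m \<le> frob_norm (A \<circ>\<^sub>H outer u)" and "0 \<le> m"
  shows "m * frob_norm B \<le> frob_norm (A \<circ>\<^sub>H B)"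
proof -
  obtain K :: nat and w where B: "B = (\<Sum>k<K. outer (w k))"
    and orth: "pairwise (\<lambda>k l. cinner (w k) (w l) = 0) {..<K}"
    using psd_eq_sum_orthogonal_outer[OF assms(2)] by blast
  define q where
    "q k l = Re (cinner (vcnj (w k) * w l) ((A \<circ>\<^sub>H mat_cnj A) *v (vcnj (w k) * w l)))" for k l
  have q_nonneg: "0 \<le> q k l" for k l
    using psd_hadamard[OF assms(1) psd_mat_cnj[OF assms(1)]] by (simp add: q_def psd_iff_cinner)
  have q_diag: "q k k = (frob_norm (A \<circ>\<^sub>H outer (w k)))\<^sup>2" for k
    using arg_cong[OF frob_norm_hadamard_sum_outer[of A w "{k}"], of Re] by (simp add: q_def)
  have diag_sum: "(\<Sum>l<K. (cmod (cinner (w k) (w l)))\<^sup>2) = ((norm (w k))\<^sup>2)\<^sup>2" if "k < K" for k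
  proof -
    have "(\<Sum>l\<in>{..<K} - {k}. (cmod (cinner (w k) (w l)))\<^sup>2) = 0"
      using orth that by (intro sum.neutral) (auto simp: pairwise_def)
    then show ?thesis
      using that by (simp add: sum.remove cinner_self norm_power)
  qed
  have "(m * frob_norm B)\<^sup>2 = m\<^sup>2 * (\<Sum>k<K. ((norm (w k))\<^sup>2)\<^sup>2)"
    unfolding B power_mult_distrib frob_norm_sum_outer using diag_sum by simp
  also have "\<dots> = (\<Sum>k<K. (m * (norm (w k))\<^sup>2)\<^sup>2)"
    by (simp add: power_mult_distrib sum_distrib_left)
  also have "\<dots> \<le> (\<Sum>k<K. q k k)"
    using frob_norm_hadamard_outer_ge[OF min] assms(4)
    by (intro sum_mono) (simp add: q_diag power_mono)
  also have "\<dots> \<le> (\<Sum>k<K. \<Sum>l<K. q k l)"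
    using q_nonneg by (intro sum_mono member_le_sum) auto
  also have "\<dots> = (frob_norm (A \<circ>\<^sub>H B))\<^sup>2"
    using arg_cong[OF frob_norm_hadamard_sum_outer[of A w "{..<K}"], of Re] by (simp add: B q_def)
  finally show ?thesis
    by (rule power2_le_imp_le) (simp add: frob_norm_eq_norm)
qed

lemma frob_norm_hadamard_outer_attains_min:
  fixes A :: "complex^'n^'n"
  obtains x where "norm x = 1"
    and "\<And>y. norm y = 1 \<Longrightarrow> frob_norm (A \<circ>\<^sub>H outer x) \<le> frob_norm (A \<circ>\<^sub>H outer y)"
proof -
  have "continuous_on (sphere 0 1) (\<lambda>x::complex^'n. frob_norm (A \<circ>\<^sub>H outer x))"
    unfolding frob_norm_def hadamard_def outer_def by (intro continuous_intros)
  moreover have "sphere (0::complex^'n) 1 \<noteq> {}"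
    by simp
  ultimately obtain x where "x \<in> sphere 0 1"
    and "\<And>y. y \<in> sphere 0 1 \<Longrightarrow> frob_norm (A \<circ>\<^sub>H outer x) \<le> frob_norm (A \<circ>\<^sub>H outer y)"
    using continuous_attains_inf[OF compact_sphere] by blast
  then show thesis
    by (intro that[of x]) simp_all
qed

theorem proposition3p1:
  fixes A :: "complex^'n^'n"
  assumes "psd A"
  shows "\<exists>x::complex^'n. norm x = 1 \<and> I2 A = frob_norm (A \<circ>\<^sub>H outer x) \<and>
           (\<forall>y::complex^'n. norm y = 1 \<longrightarrow> I2 A \<le> frob_norm (A \<circ>\<^sub>H outer y))"
proof -
  obtain x where x: "norm x = 1"
    and min: "\<And>y. norm y = 1 \<Longrightarrow> frob_norm (A \<circ>\<^sub>H outer x) \<le> frob_norm (A \<circ>\<^sub>H outer y)"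
    using frob_norm_hadamard_outer_attains_min by blast
  have "I2 A = frob_norm (A \<circ>\<^sub>H outer x)"
    unfolding I2_def
  proof (rule cInf_eq_minimum)
    have "psd (outer x)" and "frob_norm (outer x) = 1"
      using x by (simp_all add: psd_outer frob_norm_outer)
    then show "frob_norm (A \<circ>\<^sub>H outer x) \<in> {frob_norm (A \<circ>\<^sub>H B) |B. psd B \<and> frob_norm B = 1}"
      by blast
  next
    fix t
    assume "t \<in> {frob_norm (A \<circ>\<^sub>H B) |B. psd B \<and> frob_norm B = 1}"
    then obtain B where "t = frob_norm (A \<circ>\<^sub>H B)" and "psd B" and "frob_norm B = 1"
      by blast
    then show "frob_norm (A \<circ>\<^sub>H outer x) \<le> t"
      using frob_norm_hadamard_ge[OF assms \<open>psd B\<close> min] by (simp add: frob_norm_eq_norm)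
  qed
  then show ?thesis
    using x min by auto
qed

end
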